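(* Let $r\ge3$, $n>r$. The elements $K_1K_2\cdots K_n-v^r$ and $(K_i-1)(K_i-v)(K_i-v^2)\cdots(K_i-v^r)$ ($1\le i\le n$) of $\mathbf{U}(\widehat{\mathfrak{gl}}_n)$ act as zero on the tensor space $V^{\otimes r}$. Consequently $\widehat{\mathbf{S}}_v(n,r)$ is a quotient of the algebra $T$, via a surjection $\gamma:T\to\widehat{\mathbf{S}}_v(n,r)$ sending each generator to its action on $V^{\otimes r}$.
   Context: $\mathbf{U}(\widehat{\mathfrak{gl}}_n)$ is the $\mathbb{Q}(v)$-algebra with generators $E_i,F_i,K_i^{\pm1}$ ($1\le i\le n$, indices mod $n$) and relations (Q1) $K_iK_j=K_jK_i$; (Q2) $K_iK_i^{-1}=K_i^{-1}K_i=1$; (Q3) $K_iE_j=v^{\epsilon^+(i,j)}E_jK_i$; (Q4) $K_iF_j=v^{-\epsilon^+(i,j)}F_jK_i$, where $\epsilon^+(i,j)=1$ if $j=i$, $-1$ if $j\equiv i-1\pmod n$, $0$ otherwise; (Q5) $E_iF_j-F_jE_i=\delta_{ij}\frac{K_iK_{i+1}^{-1}-K_i^{-1}K_{i+1}}{v-v^{-1}}$; (Q6–Q7) $E_iE_j=E_jE_i$, $F_iF_j=F_jF_i$ if $i-j\not\equiv\pm1$; (Q8–Q9) $E_i^2E_j-(v+v^{-1})E_iE_jE_i+E_jE_i^2=0$, $F_i^2F_j-(v+v^{-1})F_iF_jF_i+F_jF_i^2=0$ if $i-j\equiv\pm1\pmod n$. $T$ is the quotient of $\mathbf{U}(\widehat{\mathfrak{gl}}_n)$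 by the additional relations $K_1\cdots K_n=v^r$ and $\prod_{j=0}^r(K_i-v^j)=0$ for all $i$. $V$ has basis $e_t$ ($t\in\mathbb{Z}$) with $E_ie_{t+1}=e_t$ if $i\equiv t\pmod n$ (else $0$), $F_ie_t=e_{t+1}$ if $i\equiv t$ (else $0$), $K_ie_t=ve_t$ if $i\equiv t$ (else $e_t$); $V^{\otimes r}$ is a module via iterating $\Delta(E_i)=E_i\otimes K_iK_{i+1}^{-1}+1\otimes E_i$, $\Delta(F_i)=K_i^{-1}K_{i+1}\otimes F_i+F_i\otimes1$, $\Delta(K_i^{\pm1})=K_i^{\pm1}\otimes K_i^{\pm1}$. $\widehat{\mathbf{S}}_v(n,r)$ is the image of $\mathbf{U}(\widehat{\mathfrak{gl}}_n)$ in $\operatorname{End}_{\mathbb{Q}(v)}(V^{\otimes r})$. *)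

theory Defs
  imports "HOL-Computational_Algebra.Polynomial" "HOL-Computational_Algebra.Fraction_Field"
          "HOL-Number_Theory.Cong"
begin

type_synonym qv = "rat poly fract"

definition vv :: qv where "vv = Fract [:0, 1:] 1"

text \<open>A vector of V is a coefficient function int => Q(v) (coefficient of e_t);
  a vector of the tensor power is a coefficient function on int lists
  (the list [t1,...,tr] indexes e_t1 (x) ... (x) e_tr).\<close>

type_synonym vec = "int list \<Rightarrow> qv"

definition bas :: "'a \<Rightarrow> 'a \<Rightarrow> qv" where
  "bas w = (\<lambda>u. if u = w then 1 else 0)"

definition vadd :: "('a \<Rightarrow> qv) \<Rightarrow> ('a \<Rightarrow> qv) \<Rightarrow> 'a \<Rightarrow> qv" where
  "vadd f g = (\<lambda>u. f u + g u)"

definition vsub :: "('a \<Rightarrow> qv) \<Rightarrow> ('a \<Rightarrow> qv) \<Rightarrow> 'a \<Rightarrow> qv" where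
  "vsub f g = (\<lambda>u. f u - g u)"

definition vscale :: "qv \<Rightarrow> ('a \<Rightarrow> qv) \<Rightarrow> 'a \<Rightarrow> qv" where
  "vscale c f = (\<lambda>u. c * f u)"

text \<open>Linear extension of a map given on basis vectors (B w = image of the
  basis vector indexed by w); meant to be applied to finitely supported vectors.\<close>
definition lin :: "('a \<Rightarrow> 'a \<Rightarrow> qv) \<Rightarrow> ('a \<Rightarrow> qv) \<Rightarrow> 'a \<Rightarrow> qv" where
  "lin B f = (\<lambda>u. \<Sum>w\<in>{w. f w \<noteq> 0}. f w * B w u)"

definition tens :: "(int \<Rightarrow> qv) \<Rightarrow> vec \<Rightarrow> vec" where
  "tens x y = (\<lambda>u. case u of [] \<Rightarrow> 0 | a # u' \<Rightarrow> x a * y u')"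

definition Vr :: "nat \<Rightarrow> vec set" where
  "Vr r = {f. finite {w. f w \<noteq> 0} \<and> (\<forall>w. f w \<noteq> 0 \<longrightarrow> length w = r)}"

definition E1 :: "nat \<Rightarrow> int \<Rightarrow> int \<Rightarrow> int \<Rightarrow> qv" where
  "E1 n i s = (if [i = s - 1] (mod int n) then bas (s - 1) else (\<lambda>_. 0))"

definition F1 :: "nat \<Rightarrow> int \<Rightarrow> int \<Rightarrow> int \<Rightarrow> qv" where
  "F1 n i s = (if [i = s] (mod int n) then bas (s + 1) else (\<lambda>_. 0))"

definition K1 :: "nat \<Rightarrow> int \<Rightarrow> int \<Rightarrow> int \<Rightarrow> qv" where
  "K1 n i s = (if [i = s] (mod int n) then vscale vv (bas s) else bas s)"

definition Kinv1 :: "nat \<Rightarrow> int \<Rightarrow> int \<Rightarrow> int \<Rightarrow> qv" where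
  "Kinv1 n i s = (if [i = s] (mod int n) then vscale (inverse vv) (bas s) else bas s)"

text \<open>Values on basis vectors, by recursion V^(tensor (k+1)) = V (tensor) V^(tensor k),
  i.e. iterating Delta as (id (tensor) Delta^(k-1)) o Delta; the empty list is the
  trivial module Q(v) (counit: E,F act by 0, K by 1).\<close>

fun KB :: "nat \<Rightarrow> int \<Rightarrow> int list \<Rightarrow> vec" where
  "KB n i [] = bas []"
| "KB n i (t # w) = tens (K1 n i t) (KB n i w)"

fun KinvB :: "nat \<Rightarrow> int \<Rightarrow> int list \<Rightarrow> vec" where
  "KinvB n i [] = bas []"
| "KinvB n i (t # w) = tens (Kinv1 n i t) (KinvB n i w)"

fun EB :: "nat \<Rightarrow> int \<Rightarrow> int list \<Rightarrow> vec" where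
  "EB n i [] = (\<lambda>_. 0)"
| "EB n i (t # w) =
     vadd (tens (E1 n i t) (lin (KB n i) (lin (KinvB n (i + 1)) (bas w))))
          (tens (bas t) (EB n i w))"

fun FB :: "nat \<Rightarrow> int \<Rightarrow> int list \<Rightarrow> vec" where
  "FB n i [] = (\<lambda>_. 0)"
| "FB n i (t # w) =
     vadd (tens (lin (Kinv1 n i) (K1 n (i + 1) t)) (FB n i w))
          (tens (F1 n i t) (bas w))"

definition opE :: "nat \<Rightarrow> int \<Rightarrow> vec \<Rightarrow> vec" where "opE n i = lin (EB n i)"
definition opF :: "nat \<Rightarrow> int \<Rightarrow> vec \<Rightarrow> vec" where "opF n i = lin (FB n i)"
definition opK :: "nat \<Rightarrow> int \<Rightarrow> vec \<Rightarrow> vec" where "opK n i = lin (KB n i)"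
definition opKinv :: "nat \<Rightarrow> int \<Rightarrow> vec \<Rightarrow> vec" where "opKinv n i = lin (KinvB n i)"

definition opprod :: "(vec \<Rightarrow> vec) list \<Rightarrow> vec \<Rightarrow> vec" where
  "opprod ops = foldr (\<circ>) ops id"

definition epsp :: "nat \<Rightarrow> int \<Rightarrow> int \<Rightarrow> int" where
  "epsp n i j = (if [j = i] (mod int n) then 1
                 else if [j = i - 1] (mod int n) then -1 else 0)"

definition adjacent :: "nat \<Rightarrow> int \<Rightarrow> int \<Rightarrow> bool" where
  "adjacent n i j \<longleftrightarrow> [i - j = 1] (mod int n) \<or> [i - j = -1] (mod int n)"

definition T_extra_relations ::
  "nat \<Rightarrow> nat \<Rightarrow> vec set \<Rightarrow> (int \<Rightarrow> vec \<Rightarrow> vec) \<Rightarrow> bool" where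
  "T_extra_relations n r W K \<longleftrightarrow>
     (\<forall>f\<in>W. opprod (map K [1..int n]) f = vscale (vv ^ r) f) \<and>
     (\<forall>i\<in>{1..int n}. \<forall>f\<in>W.
        opprod (map (\<lambda>j. \<lambda>g. vsub (K i g) (vscale (vv ^ j) g)) [0..<r+1]) f = (\<lambda>_. 0))"

text \<open>By the universal property of an algebra given by
  generators and relations, this is exactly the existence of an algebra
  homomorphism from T into End(W) sending E_i, F_i, K_i, K_i^(-1) to E i, F i, K i, Kinv i.\<close>
definition T_relations ::
  "nat \<Rightarrow> nat \<Rightarrow> vec set \<Rightarrow> (int \<Rightarrow> vec \<Rightarrow> vec) \<Rightarrow> (int \<Rightarrow> vec \<Rightarrow> vec)
     \<Rightarrow> (int \<Rightarrow> vec \<Rightarrow> vec) \<Rightarrow> (int \<Rightarrow> vec \<Rightarrow> vec) \<Rightarrow> bool" where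
  "T_relations n r W E F K Kinv \<longleftrightarrow>
     (\<forall>i\<in>{1..int n}. \<forall>j\<in>{1..int n}. \<forall>f\<in>W.
        K i (K j f) = K j (K i f) \<and>
        K i (Kinv i f) = f \<and> Kinv i (K i f) = f \<and>
        K i (E j f) = vscale (vv powi epsp n i j) (E j (K i f)) \<and>
        K i (F j f) = vscale (vv powi (- epsp n i j)) (F j (K i f)) \<and>
        vsub (E i (F j f)) (F j (E i f)) =
          (if i = j then vscale (inverse (vv - inverse vv))
                           (vsub (K i (Kinv (i + 1) f)) (Kinv i (K (i + 1) f)))
           else (\<lambda>_. 0)) \<and>
        (\<not> adjacent n i j \<longrightarrow> E i (E j f) = E j (E i f) \<and> F i (F j f) = F j (F i f)) \<and>
        (adjacent n i j \<longrightarrow>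
           vadd (vsub (E i (E i (E j f))) (vscale (vv + inverse vv) (E i (E j (E i f)))))
                (E j (E i (E i f))) = (\<lambda>_. 0) \<and>
           vadd (vsub (F i (F i (F j f))) (vscale (vv + inverse vv) (F i (F j (F i f)))))
                (F j (F i (F i f))) = (\<lambda>_. 0))) \<and>
     T_extra_relations n r W K"

end

theory Submission
  imports Defs
begin

(* On a basis tensor e_u = e_(u_1) (x) ... (x) e_(u_r) every K_k acts as multiplication by a power
   v^m, where m counts the entries of u congruent to k modulo n.  Hence K_1 ... K_n acts as v^r, and
   since 0 <= m <= r one factor K_k - v^m of the product kills e_u.  As E_j and F_j shift every
   such exponent by a fixed amount, the same weight calculus gives (Q1)-(Q4).

   The remaining relations are proved by induction on the number of tensor factors, writing
   V^(r+1) = V (x) V^r and expanding with the coproduct: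
     E_i (x (x) y) = E_i x (x) K_i K_(i+1)^-1 y + x (x) E_i y,
     F_i (x (x) y) = K_i^-1 K_(i+1) x (x) F_i y + F_i x (x) y.
   Terms in which all operators act on one factor vanish by the relation on V or by induction;
   the mixed terms cancel because K_i K_(i+1)^-1 commutes with E_j and F_j up to v^(+-a_ij), where
   (a_ij) is the Cartan matrix of affine type A_(n-1).  Its values, and the relations on V, need
   n >= 3. *)

lemma vv_neq_0 [simp]: "vv \<noteq> 0"
  by (simp add: vv_def Zero_fract_def eq_fract)

lemma vv_square_neq_1: "vv * vv \<noteq> 1"
  by (simp add: vv_def One_fract_def eq_fract one_pCons)

lemma vv_neq_inverse [simp]: "vv \<noteq> inverse vv"
proof
  assume "vv = inverse vv"
  then have "vv * vv = 1" by (metis vv_neq_0 right_inverse)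
  then show False using vv_square_neq_1 by simp
qed

definition finsupp :: "('a \<Rightarrow> qv) \<Rightarrow> bool" where
  "finsupp f \<longleftrightarrow> finite {w. f w \<noteq> 0}"

lemma finsupp_zero [simp]: "finsupp (\<lambda>_. 0)"
  by (simp add: finsupp_def)

lemma finsupp_bas [simp]: "finsupp (bas w)"
proof -
  have "{u. bas w u \<noteq> 0} = {w}" by (auto simp: bas_def)
  then show ?thesis by (simp add: finsupp_def)
qed

lemma finsupp_vadd [simp]: "finsupp f \<Longrightarrow> finsupp g \<Longrightarrow> finsupp (vadd f g)"
  unfolding finsupp_def vadd_def
  by (rule finite_subset[of _ "{w. f w \<noteq> 0} \<union> {w. g w \<noteq> 0}"]) auto

lemma finsupp_vsub [simp]: "finsupp f \<Longrightarrow> finsupp g \<Longrightarrow> finsupp (vsub f g)"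
  unfolding finsupp_def vsub_def
  by (rule finite_subset[of _ "{w. f w \<noteq> 0} \<union> {w. g w \<noteq> 0}"]) auto

lemma finsupp_mult [simp]: "finsupp f \<Longrightarrow> finsupp (\<lambda>u. c u * f u)"
  unfolding finsupp_def by (rule finite_subset[of _ "{w. f w \<noteq> 0}"]) auto

lemma finsupp_vscale [simp]: "finsupp f \<Longrightarrow> finsupp (vscale c f)"
  by (simp add: vscale_def)

lemma vscale_vscale [simp]: "vscale a (vscale b f) = vscale (a * b) f"
  by (simp add: vscale_def fun_eq_iff)

lemma vscale_one [simp]: "vscale 1 f = f"
  by (simp add: vscale_def)

lemma vsub_self [simp]: "vsub f f = (\<lambda>_. 0)"
  by (simp add: vsub_def)

lemma vadd_zero [simp]: "vadd (\<lambda>_. 0) f = f" "vadd f (\<lambda>_. 0) = f"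
  by (simp_all add: vadd_def)

lemma vscale_zero [simp]: "vscale c (\<lambda>_. 0) = (\<lambda>_. 0)"
  by (simp add: vscale_def)

lemma eq_vsub_if_vadd_vsub_eq_0:
  assumes "vadd (vsub a (vscale c b)) d = (\<lambda>_. 0)"
  shows "d = vsub (vscale c b) a"
proof
  fix u
  from fun_cong[OF assms, of u] have "a u - c * b u + d u = 0"
    by (simp add: vadd_def vsub_def vscale_def)
  then show "d u = vsub (vscale c b) a u" unfolding vsub_def vscale_def by algebra
qed

lemma lin_eq_sum:
  assumes "finite S" "{w. f w \<noteq> 0} \<subseteq> S"
  shows "lin B f u = (\<Sum>w\<in>S. f w * B w u)"
  unfolding lin_def using assms by (intro sum.mono_neutral_left) auto

lemma lin_bas [simp]: "lin B (bas w) = B w"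
proof -
  have "{w'. bas w w' \<noteq> 0} = {w}" by (auto simp: bas_def)
  then show ?thesis by (auto simp: lin_def bas_def)
qed

lemma lin_zero [simp]: "lin B (\<lambda>_. 0) = (\<lambda>_. 0)"
  by (simp add: lin_def)

lemma lin_vadd:
  assumes "finsupp f" "finsupp g"
  shows "lin B (vadd f g) = vadd (lin B f) (lin B g)"
proof
  fix u
  let ?S = "{w. f w \<noteq> 0} \<union> {w. g w \<noteq> 0}"
  have S: "finite ?S" using assms by (simp add: finsupp_def)
  have "lin B (vadd f g) u = (\<Sum>w\<in>?S. vadd f g w * B w u)"
    by (rule lin_eq_sum[OF S]) (auto simp: vadd_def)
  also have "\<dots> = (\<Sum>w\<in>?S. f w * B w u) + (\<Sum>w\<in>?S. g w * B w u)"
    by (simp add: vadd_def distrib_right sum.distrib)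
  also have "\<dots> = lin B f u + lin B g u"
    using lin_eq_sum[OF S, of f] lin_eq_sum[OF S, of g] by auto
  finally show "lin B (vadd f g) u = vadd (lin B f) (lin B g) u" by (simp add: vadd_def)
qed

lemma lin_vscale:
  assumes "finsupp f"
  shows "lin B (vscale c f) = vscale c (lin B f)"
proof
  fix u
  let ?S = "{w. f w \<noteq> 0}"
  have S: "finite ?S" using assms by (simp add: finsupp_def)
  have "lin B (vscale c f) u = (\<Sum>w\<in>?S. vscale c f w * B w u)"
    by (rule lin_eq_sum[OF S]) (auto simp: vscale_def)
  also have "\<dots> = c * lin B f u"
    using lin_eq_sum[OF S, of f] by (simp add: vscale_def sum_distrib_left mult.assoc)
  finally show "lin B (vscale c f) u = vscale c (lin B f) u" by (simp add: vscale_def)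
qed

lemma lin_vsub:
  assumes "finsupp f" "finsupp g"
  shows "lin B (vsub f g) = vsub (lin B f) (lin B g)"
proof -
  have minus: "vsub a b = vadd a (vscale (-1) b)" for a b :: "'a \<Rightarrow> qv"
    by (simp add: vsub_def vadd_def vscale_def fun_eq_iff)
  show ?thesis using assms by (simp add: minus lin_vadd lin_vscale)
qed

lemma finsupp_lin [simp]:
  assumes "finsupp f" "\<And>w. finsupp (B w)"
  shows "finsupp (lin B f)"
proof -
  have "{u. lin B f u \<noteq> 0} \<subseteq> (\<Union>w\<in>{w. f w \<noteq> 0}. {u. B w u \<noteq> 0})"
  proof
    fix u assume "u \<in> {u. lin B f u \<noteq> 0}"
    then have "(\<Sum>w\<in>{w. f w \<noteq> 0}. f w * B w u) \<noteq> 0" by (simp add: lin_def)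
    then obtain w where "w \<in> {w. f w \<noteq> 0}" "f w * B w u \<noteq> 0"
      by (rule sum.not_neutral_contains_not_neutral)
    then show "u \<in> (\<Union>w\<in>{w. f w \<noteq> 0}. {u. B w u \<noteq> 0})" by auto
  qed
  moreover have "finite (\<Union>w\<in>{w. f w \<noteq> 0}. {u. B w u \<noteq> 0})"
    using assms unfolding finsupp_def by blast
  ultimately show ?thesis unfolding finsupp_def by (rule finite_subset)
qed

definition fs_linear :: "(('a \<Rightarrow> qv) \<Rightarrow> ('b \<Rightarrow> qv)) \<Rightarrow> bool" where
  "fs_linear P \<longleftrightarrow>
     (\<forall>f g. finsupp f \<longrightarrow> finsupp g \<longrightarrow> P (vadd f g) = vadd (P f) (P g)) \<and>
     (\<forall>c f. finsupp f \<longrightarrow> P (vscale c f) = vscale c (P f))"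

definition fs_preserving :: "(('a \<Rightarrow> qv) \<Rightarrow> ('b \<Rightarrow> qv)) \<Rightarrow> bool" where
  "fs_preserving P \<longleftrightarrow> (\<forall>f. finsupp f \<longrightarrow> finsupp (P f))"

lemma fs_linear_eqI:
  assumes P: "fs_linear P" and Q: "fs_linear Q" and basis: "\<And>w. P (bas w) = Q (bas w)"
    and f: "finsupp f"
  shows "P f = Q f"
proof -
  have "\<forall>f. {w. f w \<noteq> 0} \<subseteq> S \<longrightarrow> P f = Q f" if "finite S" for S
    using that
  proof induction
    case empty
    show ?case
    proof (intro allI impI)
      fix f :: "'a \<Rightarrow> qv" assume "{w. f w \<noteq> 0} \<subseteq> {}"
      then have f0: "f = vscale 0 (bas undefined)" by (auto simp: vscale_def)
      have "P f = vscale 0 (P (bas undefined))" using P unfolding fs_linear_def f0 by simp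
      moreover have "Q f = vscale 0 (Q (bas undefined))" using Q unfolding fs_linear_def f0 by simp
      ultimately show "P f = Q f" using basis by simp
    qed
  next
    case (insert a S)
    show ?case
    proof (intro allI impI)
      fix f :: "'a \<Rightarrow> qv" assume supp: "{w. f w \<noteq> 0} \<subseteq> insert a S"
      define g where "g = f(a := 0)"
      have f_split: "f = vadd (vscale (f a) (bas a)) g"
        by (auto simp: g_def vadd_def vscale_def bas_def)
      have "{w. g w \<noteq> 0} \<subseteq> S" using supp by (auto simp: g_def)
      then have "P g = Q g" and g: "finsupp g"
        using insert by (auto simp: finsupp_def intro: finite_subset)
      have "R f = vadd (vscale (f a) (R (bas a))) (R g)" if "fs_linear R" for R :: "_ \<Rightarrow> 'b \<Rightarrow> qv"
        using that g by (subst f_split) (simp add: fs_linear_def)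
      then show "P f = Q f" using P Q basis \<open>P g = Q g\<close> by metis
    qed
  qed
  then show ?thesis using f by (auto simp: finsupp_def)
qed

lemma fs_linear_id: "fs_linear (\<lambda>f. f)"
  by (simp add: fs_linear_def)

lemma fs_linear_zero: "fs_linear (\<lambda>f u. 0)"
  by (simp add: fs_linear_def vadd_def vscale_def fun_eq_iff)

lemma fs_linear_lin: "fs_linear P \<Longrightarrow> fs_preserving P \<Longrightarrow> fs_linear (\<lambda>f. lin B (P f))"
  by (simp add: fs_linear_def fs_preserving_def lin_vadd lin_vscale)

lemma fs_linear_vadd: "fs_linear P \<Longrightarrow> fs_linear Q \<Longrightarrow> fs_linear (\<lambda>f. vadd (P f) (Q f))"
  by (simp add: fs_linear_def vadd_def vscale_def fun_eq_iff algebra_simps)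

lemma fs_linear_vsub: "fs_linear P \<Longrightarrow> fs_linear Q \<Longrightarrow> fs_linear (\<lambda>f. vsub (P f) (Q f))"
  by (simp add: fs_linear_def vadd_def vsub_def vscale_def fun_eq_iff algebra_simps)

lemma fs_linear_vscale: "fs_linear P \<Longrightarrow> fs_linear (\<lambda>f. vscale c (P f))"
  by (simp add: fs_linear_def vadd_def vscale_def fun_eq_iff algebra_simps)

lemma fs_preserving_id: "fs_preserving (\<lambda>f. f)"
  by (simp add: fs_preserving_def)

lemma fs_preserving_lin: "fs_preserving P \<Longrightarrow> (\<And>w. finsupp (B w)) \<Longrightarrow> fs_preserving (\<lambda>f. lin B (P f))"
  by (simp add: fs_preserving_def)

lemma fs_preserving_vadd: "fs_preserving P \<Longrightarrow> fs_preserving Q \<Longrightarrow> fs_preserving (\<lambda>f. vadd (P f) (Q f))"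
  by (simp add: fs_preserving_def)

lemma fs_preserving_vsub: "fs_preserving P \<Longrightarrow> fs_preserving Q \<Longrightarrow> fs_preserving (\<lambda>f. vsub (P f) (Q f))"
  by (simp add: fs_preserving_def)

lemma fs_preserving_vscale: "fs_preserving P \<Longrightarrow> fs_preserving (\<lambda>f. vscale c (P f))"
  by (simp add: fs_preserving_def)

lemma lin_lin:
  assumes "finsupp x" "\<And>w. finsupp (B w)"
  shows "lin A (lin B x) = lin (\<lambda>w. lin A (B w)) x"
proof (rule fs_linear_eqI[OF _ _ _ assms(1)])
  show "fs_linear (\<lambda>x. lin A (lin B x))"
    using assms(2) by (intro fs_linear_lin fs_linear_id fs_preserving_lin fs_preserving_id)
  show "fs_linear (lin (\<lambda>w. lin A (B w)))"
    by (simp add: fs_linear_def lin_vadd lin_vscale)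
qed simp

lemma lin_lin_eq_0:
  assumes "finsupp x" "\<And>w. finsupp (B w)" "\<And>w. lin A (B w) = (\<lambda>_. 0)"
  shows "lin A (lin B x) = (\<lambda>_. 0)"
proof -
  have "lin A (lin B x) = lin (\<lambda>w. lin A (B w)) x"
    using assms(1,2) by (rule lin_lin)
  also have "\<dots> = (\<lambda>_. 0)"
    using assms(3) by (simp add: lin_def)
  finally show ?thesis .
qed

lemma lin_lin_lin_eq_0:
  assumes "finsupp x" "\<And>w. finsupp (B w)" "\<And>w. finsupp (C w)"
    and "\<And>w. lin A (lin B (C w)) = (\<lambda>_. 0)"
  shows "lin A (lin B (lin C x)) = (\<lambda>_. 0)"
proof -
  have "lin B (lin C x) = lin (\<lambda>w. lin B (C w)) x"
    using assms(1,3) by (rule lin_lin)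
  moreover have "lin A (lin (\<lambda>w. lin B (C w)) x) = (\<lambda>_. 0)"
    using assms by (intro lin_lin_eq_0[where B = "\<lambda>w. lin B (C w)"]) simp_all
  ultimately show ?thesis by simp
qed

lemma finsupp_tens [simp]:
  assumes "finsupp x" "finsupp y"
  shows "finsupp (tens x y)"
proof -
  have "{u. tens x y u \<noteq> 0} \<subseteq> (\<lambda>(a, u). a # u) ` ({a. x a \<noteq> 0} \<times> {u. y u \<noteq> 0})"
  proof
    fix u assume "u \<in> {u. tens x y u \<noteq> 0}"
    then show "u \<in> (\<lambda>(a, u). a # u) ` ({a. x a \<noteq> 0} \<times> {u. y u \<noteq> 0})"
      by (cases u) (auto simp: tens_def)
  qed
  moreover have "finite ((\<lambda>(a, u). a # u) ` ({a. x a \<noteq> 0} \<times> {u. y u \<noteq> 0}))"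
    using assms unfolding finsupp_def by blast
  ultimately show ?thesis unfolding finsupp_def by (rule finite_subset)
qed

lemma tens_vaddL: "tens (vadd x1 x2) y = vadd (tens x1 y) (tens x2 y)"
  by (simp add: tens_def vadd_def fun_eq_iff algebra_simps split: list.split)

lemma tens_vaddR: "tens x (vadd y1 y2) = vadd (tens x y1) (tens x y2)"
  by (simp add: tens_def vadd_def fun_eq_iff algebra_simps split: list.split)

lemma tens_vscaleL: "tens (vscale c x) y = vscale c (tens x y)"
  by (simp add: tens_def vscale_def fun_eq_iff split: list.split)

lemma tens_vscaleR: "tens x (vscale c y) = vscale c (tens x y)"
  by (simp add: tens_def vscale_def fun_eq_iff split: list.split)

lemma tens_Nil [simp]: "tens x y [] = 0"
  by (simp add: tens_def)

lemma tens_Cons [simp]: "tens x y (a # u) = x a * y u"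
  by (simp add: tens_def)

lemma tens_bas [simp]: "tens (bas t) (bas w) = bas (t # w)"
  by (simp add: tens_def bas_def fun_eq_iff split: list.split)

lemma fs_linear_tensL: "fs_linear P \<Longrightarrow> fs_linear (\<lambda>f. tens (P f) y)"
  by (simp add: fs_linear_def tens_vaddL tens_vscaleL)

lemma fs_linear_tensR: "fs_linear P \<Longrightarrow> fs_linear (\<lambda>f. tens x (P f))"
  by (simp add: fs_linear_def tens_vaddR tens_vscaleR)

lemma fs_preserving_tensL: "fs_preserving P \<Longrightarrow> finsupp y \<Longrightarrow> fs_preserving (\<lambda>f. tens (P f) y)"
  by (simp add: fs_preserving_def)

lemma fs_preserving_tensR: "fs_preserving P \<Longrightarrow> finsupp x \<Longrightarrow> fs_preserving (\<lambda>f. tens x (P f))"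
  by (simp add: fs_preserving_def)

lemma tensor_induct [consumes 1, case_names lhs_linear rhs_linear scalars tens]:
  fixes P Q :: "vec \<Rightarrow> vec"
  assumes "finsupp f" "fs_linear P" "fs_linear Q" "P (bas []) = Q (bas [])"
    and "\<And>(x :: int \<Rightarrow> qv) y. finsupp x \<Longrightarrow> finsupp y \<Longrightarrow> P y = Q y \<Longrightarrow> P (tens x y) = Q (tens x y)"
  shows "P f = Q f"
proof (rule fs_linear_eqI[OF assms(2,3) _ assms(1)])
  fix w show "P (bas w) = Q (bas w)"
  proof (induction w)
    case Nil
    show ?case by (rule assms(4))
  next
    case (Cons t w)
    have "P (tens (bas t) (bas w)) = Q (tens (bas t) (bas w))"
      by (rule assms(5)) (simp_all add: Cons.IH)
    then show ?case by simp
  qed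
qed

lemma list_fun_eqI: "f [] = g [] \<Longrightarrow> (\<And>a u. f (a # u) = g (a # u)) \<Longrightarrow> f = g"
  by (rule ext) (case_tac x, simp_all)

definition vdiag :: "('a \<Rightarrow> int) \<Rightarrow> ('a \<Rightarrow> qv) \<Rightarrow> 'a \<Rightarrow> qv" where
  "vdiag d f = (\<lambda>u. vv powi d u * f u)"

lemma finsupp_vdiag [simp]: "finsupp f \<Longrightarrow> finsupp (vdiag d f)"
  by (simp add: vdiag_def)

lemma vdiag_vadd: "vdiag d (vadd f g) = vadd (vdiag d f) (vdiag d g)"
  by (simp add: vadd_def vdiag_def fun_eq_iff algebra_simps)

lemma vdiag_vsub: "vdiag d (vsub f g) = vsub (vdiag d f) (vdiag d g)"
  by (simp add: vsub_def vdiag_def fun_eq_iff algebra_simps)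

lemma vdiag_vscale: "vdiag d (vscale c f) = vscale c (vdiag d f)"
  by (simp add: vscale_def vdiag_def fun_eq_iff algebra_simps)

lemma vdiag_bas: "vdiag d (bas w) = vscale (vv powi d w) (bas w)"
  by (simp add: vscale_def vdiag_def fun_eq_iff bas_def)

lemma vdiag_vdiag: "vdiag d (vdiag e f) = vdiag (\<lambda>u. d u + e u) f"
  by (simp add: vdiag_def fun_eq_iff power_int_add mult_ac)

lemma vdiag_0 [simp]: "vdiag (\<lambda>_. 0) f = f"
  by (simp add: vdiag_def)

lemma vdiag_commute: "vdiag d (vdiag e f) = vdiag e (vdiag d f)"
  by (simp add: vdiag_vdiag add.commute)

lemma fs_linear_vdiag: "fs_linear P \<Longrightarrow> fs_linear (\<lambda>f. vdiag d (P f))"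
  by (simp add: fs_linear_def vdiag_vadd vdiag_vscale)

lemma fs_preserving_vdiag: "fs_preserving P \<Longrightarrow> fs_preserving (\<lambda>f. vdiag d (P f))"
  by (simp add: fs_preserving_def)

lemma lin_eq_vdiag:
  assumes "finsupp f"
  shows "lin (\<lambda>w. vscale (vv powi d w) (bas w)) f = vdiag d f"
proof
  fix u
  let ?S = "insert u {w. f w \<noteq> 0}"
  have S: "finite ?S" using assms by (simp add: finsupp_def)
  have "lin (\<lambda>w. vscale (vv powi d w) (bas w)) f u
        = (\<Sum>w\<in>?S. if w = u then f u * vv powi d u else 0)"
    by (subst lin_eq_sum[OF S]) (auto simp: vscale_def bas_def intro: sum.cong)
  also have "\<dots> = vdiag d f u" using S by (simp add: vdiag_def)
  finally show "lin (\<lambda>w. vscale (vv powi d w) (bas w)) f u = vdiag d f u" .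
qed

definition shifts_by :: "('a \<Rightarrow> 'a \<Rightarrow> qv) \<Rightarrow> ('a \<Rightarrow> int) \<Rightarrow> int \<Rightarrow> bool" where
  "shifts_by B d e \<longleftrightarrow> (\<forall>w u. B w u \<noteq> 0 \<longrightarrow> d u = d w + e)"

lemma shifts_by_diff:
  assumes "shifts_by B d1 e1" "shifts_by B d2 e2" "\<And>u. d u = d1 u - d2 u" "e = e1 - e2"
  shows "shifts_by B d e"
  using assms by (simp add: shifts_by_def)

lemma vdiag_lin_commute:
  assumes B: "\<And>w. finsupp (B w)" and shift: "shifts_by B d e" and z: "finsupp z"
  shows "vdiag d (lin B z) = vscale (vv powi e) (lin B (vdiag d z))"
proof (rule fs_linear_eqI[OF _ _ _ z])
  show "fs_linear (\<lambda>z. vdiag d (lin B z))"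
    using B by (intro fs_linear_vdiag fs_linear_lin fs_linear_id fs_preserving_id)
  show "fs_linear (\<lambda>z. vscale (vv powi e) (lin B (vdiag d z)))"
    by (intro fs_linear_vscale fs_linear_lin fs_linear_vdiag fs_linear_id fs_preserving_vdiag
        fs_preserving_id)
  fix w
  have "lin B (vdiag d (bas w)) = vscale (vv powi d w) (B w)"
    by (simp add: vdiag_bas lin_vscale)
  moreover have "vv powi d u * B w u = vv powi e * (vv powi d w * B w u)" for u
    using shift by (cases "B w u = 0") (simp_all add: shifts_by_def power_int_add mult_ac)
  ultimately show "vdiag d (lin B (bas w)) = vscale (vv powi e) (lin B (vdiag d (bas w)))"
    by (simp add: vdiag_def vscale_def fun_eq_iff)
qed

lemmas tens_expand = tens_vaddL tens_vaddR tens_vscaleL tens_vscaleR lin_vadd lin_vscale lin_vsub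
  vdiag_vadd vdiag_vsub vdiag_vscale

lemmas vec_op_defs = vadd_def vsub_def vscale_def vdiag_def

text \<open>K_k acts on the basis vector indexed by u as multiplication by v^(wt n k u), where
  wt n k u counts the entries of u congruent to k modulo n; hwt n i is the corresponding
  exponent for K_i K_(i+1)^-1.  The entry cartan n i j of the Cartan matrix is the amount by
  which E_j raises hwt n i.\<close>

definition wt1 :: "nat \<Rightarrow> int \<Rightarrow> int \<Rightarrow> int" where
  "wt1 n k a = (if [k = a] (mod int n) then 1 else 0)"

fun wt :: "nat \<Rightarrow> int \<Rightarrow> int list \<Rightarrow> int" where
  "wt n k [] = 0"
| "wt n k (a # u) = wt1 n k a + wt n k u"

definition hwt1 :: "nat \<Rightarrow> int \<Rightarrow> int \<Rightarrow> int" where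
  "hwt1 n i a = wt1 n i a - wt1 n (i + 1) a"

definition hwt :: "nat \<Rightarrow> int \<Rightarrow> int list \<Rightarrow> int" where
  "hwt n i u = wt n i u - wt n (i + 1) u"

lemma hwt_Nil [simp]: "hwt n i [] = 0"
  by (simp add: hwt_def)

lemma hwt_Cons [simp]: "hwt n i (a # u) = hwt1 n i a + hwt n i u"
  by (simp add: hwt_def hwt1_def)

definition cartan :: "nat \<Rightarrow> int \<Rightarrow> int \<Rightarrow> int" where
  "cartan n i j = 2 * wt1 n i j - wt1 n i (j + 1) - wt1 n (i + 1) j"

lemma wt1_cong: "[a = b] (mod int n) \<Longrightarrow> wt1 n k a = wt1 n k b"
  unfolding wt1_def by (meson cong_sym cong_trans)

lemma wt1_commute: "wt1 n a b = wt1 n b a"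
  unfolding wt1_def by (simp add: cong_sym_eq)

lemma wt1_cong_left: "[a = a'] (mod int n) \<Longrightarrow> wt1 n a b = wt1 n a' b"
  using wt1_cong wt1_commute by metis

lemma wt1_self [simp]: "wt1 n a a = 1"
  by (simp add: wt1_def)

lemma wt1_add_1 [simp]: "wt1 n (a + 1) (b + 1) = wt1 n a b"
  unfolding wt1_def by (simp add: cong_iff_dvd_diff)

lemma cartan_commute: "cartan n i j = cartan n j i"
  unfolding cartan_def using wt1_commute[of n i j] wt1_commute[of n i "j + 1"]
    wt1_commute[of n "i + 1" j] by simp

lemma wt_bounds: "0 \<le> wt n k u \<and> wt n k u \<le> int (length u)"
  by (induction u) (auto simp: wt1_def)

lemma KB_eq_vscale: "KB n k w = vscale (vv powi wt n k w) (bas w)"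
  by (induction w)
    (simp_all add: K1_def wt1_def tens_vscaleL tens_vscaleR power_int_add mult_ac)

lemma KinvB_eq_vscale: "KinvB n k w = vscale (vv powi (- wt n k w)) (bas w)"
  by (induction w)
    (simp_all add: Kinv1_def wt1_def tens_vscaleL tens_vscaleR power_int_diff power_int_minus
      field_simps)

lemma opK_eq_vdiag: "finsupp f \<Longrightarrow> opK n k f = vdiag (wt n k) f"
  unfolding opK_def KB_eq_vscale by (rule lin_eq_vdiag)

lemma opKinv_eq_vdiag: "finsupp f \<Longrightarrow> opKinv n k f = vdiag (\<lambda>u. - wt n k u) f"
  unfolding opKinv_def KinvB_eq_vscale by (rule lin_eq_vdiag)

lemma opK_commute: "finsupp f \<Longrightarrow> opK n i (opK n j f) = opK n j (opK n i f)"
  by (simp add: opK_eq_vdiag vdiag_commute)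

lemma opK_opKinv: "finsupp f \<Longrightarrow> opK n i (opKinv n i f) = f"
  by (simp add: opK_eq_vdiag opKinv_eq_vdiag vdiag_vdiag)

lemma opKinv_opK: "finsupp f \<Longrightarrow> opKinv n i (opK n i f) = f"
  by (simp add: opK_eq_vdiag opKinv_eq_vdiag vdiag_vdiag)

lemma EB_Cons_vdiag:
  "EB n i (t # w) = vadd (tens (E1 n i t) (vdiag (hwt n i) (bas w))) (tens (bas t) (EB n i w))"
  by (simp add: KB_eq_vscale KinvB_eq_vscale lin_vscale vdiag_bas hwt_def power_int_diff
      power_int_minus field_simps)

lemma FB_Cons_vdiag:
  "FB n i (t # w) =
     vadd (tens (vdiag (\<lambda>a. - hwt1 n i a) (bas t)) (FB n i w)) (tens (F1 n i t) (bas w))"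
  by (simp add: K1_def Kinv1_def wt1_def hwt1_def vdiag_bas lin_vscale power_int_diff
      power_int_minus field_simps)

lemma finsupp_E1 [simp]: "finsupp (E1 n i t)"
  by (simp add: E1_def)

lemma finsupp_F1 [simp]: "finsupp (F1 n i t)"
  by (simp add: F1_def)

lemma finsupp_EB [simp]: "finsupp (EB n i w)"
  by (induction w) (simp_all add: EB_Cons_vdiag del: EB.simps(2))

lemma finsupp_FB [simp]: "finsupp (FB n i w)"
  by (induction w) (simp_all add: FB_Cons_vdiag del: FB.simps(2))

lemma finsupp_opE [simp]: "finsupp f \<Longrightarrow> finsupp (opE n i f)"
  by (simp add: opE_def)

lemma finsupp_opF [simp]: "finsupp f \<Longrightarrow> finsupp (opF n i f)"
  by (simp add: opF_def)

lemma opE_vadd [simp]: "finsupp f \<Longrightarrow> finsupp g \<Longrightarrow> opE n i (vadd f g) = vadd (opE n i f) (opE n i g)"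
  by (simp add: opE_def lin_vadd)

lemma opE_vsub [simp]: "finsupp f \<Longrightarrow> finsupp g \<Longrightarrow> opE n i (vsub f g) = vsub (opE n i f) (opE n i g)"
  by (simp add: opE_def lin_vsub)

lemma opE_vscale [simp]: "finsupp f \<Longrightarrow> opE n i (vscale c f) = vscale c (opE n i f)"
  by (simp add: opE_def lin_vscale)

lemma opF_vadd [simp]: "finsupp f \<Longrightarrow> finsupp g \<Longrightarrow> opF n i (vadd f g) = vadd (opF n i f) (opF n i g)"
  by (simp add: opF_def lin_vadd)

lemma opF_vsub [simp]: "finsupp f \<Longrightarrow> finsupp g \<Longrightarrow> opF n i (vsub f g) = vsub (opF n i f) (opF n i g)"
  by (simp add: opF_def lin_vsub)

lemma opF_vscale [simp]: "finsupp f \<Longrightarrow> opF n i (vscale c f) = vscale c (opF n i f)"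
  by (simp add: opF_def lin_vscale)

lemma fs_linear_opE: "fs_linear P \<Longrightarrow> fs_preserving P \<Longrightarrow> fs_linear (\<lambda>f. opE n i (P f))"
  unfolding opE_def by (rule fs_linear_lin)

lemma fs_linear_opF: "fs_linear P \<Longrightarrow> fs_preserving P \<Longrightarrow> fs_linear (\<lambda>f. opF n i (P f))"
  unfolding opF_def by (rule fs_linear_lin)

lemma fs_preserving_opE: "fs_preserving P \<Longrightarrow> fs_preserving (\<lambda>f. opE n i (P f))"
  unfolding opE_def by (rule fs_preserving_lin) simp_all

lemma fs_preserving_opF: "fs_preserving P \<Longrightarrow> fs_preserving (\<lambda>f. opF n i (P f))"
  unfolding opF_def by (rule fs_preserving_lin) simp_all

lemmas fs_linear_intros = fs_linear_id fs_linear_zero fs_linear_lin fs_linear_tensL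
  fs_linear_tensR fs_linear_vadd fs_linear_vsub fs_linear_vscale fs_linear_vdiag

lemmas fs_preserving_intros = fs_preserving_id fs_preserving_lin fs_preserving_tensL
  fs_preserving_tensR fs_preserving_vadd fs_preserving_vsub fs_preserving_vscale
  fs_preserving_vdiag

lemmas fs_op_intros = fs_linear_intros fs_preserving_intros fs_linear_opE fs_linear_opF
  fs_preserving_opE fs_preserving_opF

lemma opE_tens:
  assumes "finsupp x" "finsupp y"
  shows "opE n i (tens x y) =
           vadd (tens (lin (E1 n i) x) (vdiag (hwt n i) y)) (tens x (opE n i y))"
proof -
  have basis: "opE n i (tens (bas t) y) =
      vadd (tens (E1 n i t) (vdiag (hwt n i) y)) (tens (bas t) (opE n i y))"
    if "finsupp y" for t y
    using that unfolding opE_def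
    by (rule fs_linear_eqI[rotated 3]; (intro fs_linear_intros fs_preserving_intros)?)
      (simp_all add: EB_Cons_vdiag del: EB.simps(2))
  show ?thesis
    using assms(1) unfolding opE_def
    by (rule fs_linear_eqI[rotated 3]; (intro fs_linear_intros fs_preserving_intros)?)
      (use assms(2) basis in \<open>simp_all add: opE_def\<close>)
qed

lemma opF_tens:
  assumes "finsupp x" "finsupp y"
  shows "opF n i (tens x y) =
           vadd (tens (vdiag (\<lambda>a. - hwt1 n i a) x) (opF n i y)) (tens (lin (F1 n i) x) y)"
proof -
  have basis: "opF n i (tens (bas t) y) =
      vadd (tens (vdiag (\<lambda>a. - hwt1 n i a) (bas t)) (opF n i y)) (tens (F1 n i t) y)"
    if "finsupp y" for t y
    using that unfolding opF_def
    by (rule fs_linear_eqI[rotated 3]; (intro fs_linear_intros fs_preserving_intros)?)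
      (simp_all add: FB_Cons_vdiag del: FB.simps(2))
  show ?thesis
    using assms(1) unfolding opF_def
    by (rule fs_linear_eqI[rotated 3]; (intro fs_linear_intros fs_preserving_intros)?)
      (use assms(2) basis in \<open>simp_all add: opF_def\<close>)
qed

lemma E1_shifts_wt1: "shifts_by (E1 n j) (wt1 n k) (wt1 n k j - wt1 n k (j + 1))"
  unfolding shifts_by_def
proof (intro allI impI)
  fix t a assume "E1 n j t a \<noteq> 0"
  then have j: "[j = t - 1] (mod int n)" and a: "a = t - 1"
    by (auto simp: E1_def bas_def split: if_splits)
  have "wt1 n k j = wt1 n k (t - 1)" using j by (rule wt1_cong)
  moreover have "wt1 n k (j + 1) = wt1 n k t"
    using cong_add[OF j cong_refl, of 1] by (intro wt1_cong) simp
  ultimately show "wt1 n k a = wt1 n k t + (wt1 n k j - wt1 n k (j + 1))" using a by simp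
qed

lemma F1_shifts_wt1: "shifts_by (F1 n j) (wt1 n k) (- (wt1 n k j - wt1 n k (j + 1)))"
  unfolding shifts_by_def
proof (intro allI impI)
  fix t a assume "F1 n j t a \<noteq> 0"
  then have j: "[j = t] (mod int n)" and a: "a = t + 1"
    by (auto simp: F1_def bas_def split: if_splits)
  have "wt1 n k j = wt1 n k t" using j by (rule wt1_cong)
  moreover have "wt1 n k (j + 1) = wt1 n k (t + 1)"
    using cong_add[OF j cong_refl, of 1] by (rule wt1_cong)
  ultimately show "wt1 n k a = wt1 n k t + - (wt1 n k j - wt1 n k (j + 1))" using a by simp
qed

lemma EB_shifts_wt: "shifts_by (EB n j) (wt n k) (wt1 n k j - wt1 n k (j + 1))"
  unfolding shifts_by_def
proof (rule allI)
  fix w show "\<forall>u. EB n j w u \<noteq> 0 \<longrightarrow> wt n k u = wt n k w + (wt1 n k j - wt1 n k (j + 1))"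
  proof (induction w)
    case (Cons t w)
    show ?case
    proof (intro allI impI)
      fix u assume u: "EB n j (t # w) u \<noteq> 0"
      then obtain a u' where u_Cons: "u = a # u'"
        by (cases u) (simp_all add: EB_Cons_vdiag vadd_def del: EB.simps(2))
      from u have "E1 n j t a * vdiag (hwt n j) (bas w) u' + bas t a * EB n j w u' \<noteq> 0"
        by (simp add: EB_Cons_vdiag vadd_def u_Cons del: EB.simps(2))
      then consider "E1 n j t a \<noteq> 0" "u' = w" | "a = t" "EB n j w u' \<noteq> 0"
        by (fastforce simp: vdiag_def bas_def split: if_splits)
      then show "wt n k u = wt n k (t # w) + (wt1 n k j - wt1 n k (j + 1))"
      proof cases
        case 1
        then show ?thesis using E1_shifts_wt1[of n j k] by (simp add: shifts_by_def u_Cons)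
      next
        case 2
        then show ?thesis using Cons.IH by (simp add: u_Cons)
      qed
    qed
  qed simp
qed

lemma FB_shifts_wt: "shifts_by (FB n j) (wt n k) (- (wt1 n k j - wt1 n k (j + 1)))"
  unfolding shifts_by_def
proof (rule allI)
  fix w show "\<forall>u. FB n j w u \<noteq> 0 \<longrightarrow> wt n k u = wt n k w + - (wt1 n k j - wt1 n k (j + 1))"
  proof (induction w)
    case (Cons t w)
    show ?case
    proof (intro allI impI)
      fix u assume u: "FB n j (t # w) u \<noteq> 0"
      then obtain a u' where u_Cons: "u = a # u'"
        by (cases u) (simp_all add: FB_Cons_vdiag vadd_def del: FB.simps(2))
      from u have "vdiag (\<lambda>a. - hwt1 n j a) (bas t) a * FB n j w u' + F1 n j t a * bas w u' \<noteq> 0"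
        by (simp add: FB_Cons_vdiag vadd_def u_Cons del: FB.simps(2))
      then consider "a = t" "FB n j w u' \<noteq> 0" | "F1 n j t a \<noteq> 0" "u' = w"
        by (fastforce simp: vdiag_def bas_def split: if_splits)
      then show "wt n k u = wt n k (t # w) + - (wt1 n k j - wt1 n k (j + 1))"
      proof cases
        case 1
        then show ?thesis using Cons.IH by (simp add: u_Cons)
      next
        case 2
        then show ?thesis using F1_shifts_wt1[of n j k] by (simp add: shifts_by_def u_Cons)
      qed
    qed
  qed simp
qed

lemma EB_shifts_hwt: "shifts_by (EB n j) (hwt n i) (cartan n i j)"
  by (rule shifts_by_diff[OF EB_shifts_wt[of n j i] EB_shifts_wt[of n j "i + 1"]])
    (simp_all add: hwt_def cartan_def)

lemma FB_shifts_hwt: "shifts_by (FB n j) (hwt n i) (- cartan n i j)"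
  by (rule shifts_by_diff[OF FB_shifts_wt[of n j i] FB_shifts_wt[of n j "i + 1"]])
    (simp_all add: hwt_def cartan_def)

lemma E1_shifts_neg_hwt1: "shifts_by (E1 n j) (\<lambda>a. - hwt1 n i a) (- cartan n i j)"
  by (rule shifts_by_diff[OF E1_shifts_wt1[of n j "i + 1"] E1_shifts_wt1[of n j i]])
    (simp_all add: hwt1_def cartan_def)

lemma F1_shifts_neg_hwt1: "shifts_by (F1 n j) (\<lambda>a. - hwt1 n i a) (cartan n i j)"
  by (rule shifts_by_diff[OF F1_shifts_wt1[of n j "i + 1"] F1_shifts_wt1[of n j i]])
    (simp_all add: hwt1_def cartan_def)

lemma vdiag_wt_opE:
  "finsupp z \<Longrightarrow> vdiag (wt n k) (opE n j z) =
     vscale (vv powi (wt1 n k j - wt1 n k (j + 1))) (opE n j (vdiag (wt n k) z))"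
  unfolding opE_def by (rule vdiag_lin_commute[OF _ EB_shifts_wt]) simp_all

lemma vdiag_wt_opF:
  "finsupp z \<Longrightarrow> vdiag (wt n k) (opF n j z) =
     vscale (vv powi (- (wt1 n k j - wt1 n k (j + 1)))) (opF n j (vdiag (wt n k) z))"
  unfolding opF_def by (rule vdiag_lin_commute[OF _ FB_shifts_wt]) simp_all

lemma vdiag_hwt_opE:
  "finsupp z \<Longrightarrow>
     vdiag (hwt n i) (opE n j z) = vscale (vv powi cartan n i j) (opE n j (vdiag (hwt n i) z))"
  unfolding opE_def by (rule vdiag_lin_commute[OF _ EB_shifts_hwt]) simp_all

lemma vdiag_hwt_opF:
  "finsupp z \<Longrightarrow>
     vdiag (hwt n i) (opF n j z) = vscale (vv powi (- cartan n i j)) (opF n j (vdiag (hwt n i) z))"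
  unfolding opF_def by (rule vdiag_lin_commute[OF _ FB_shifts_hwt]) simp_all

lemma vdiag_neg_hwt1_E1:
  "finsupp z \<Longrightarrow> vdiag (\<lambda>a. - hwt1 n i a) (lin (E1 n j) z) =
     vscale (vv powi (- cartan n i j)) (lin (E1 n j) (vdiag (\<lambda>a. - hwt1 n i a) z))"
  by (rule vdiag_lin_commute[OF _ E1_shifts_neg_hwt1]) simp_all

lemma vdiag_neg_hwt1_F1:
  "finsupp z \<Longrightarrow> vdiag (\<lambda>a. - hwt1 n i a) (lin (F1 n j) z) =
     vscale (vv powi cartan n i j) (lin (F1 n j) (vdiag (\<lambda>a. - hwt1 n i a) z))"
  by (rule vdiag_lin_commute[OF _ F1_shifts_neg_hwt1]) simp_all

section \<open>Relations on the natural module\<close>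

lemma cong_imp_eq_if_close:
  fixes a b m :: int
  assumes "[a = b] (mod m)" "\<bar>a - b\<bar> < m"
  shows "a = b"
proof (rule ccontr)
  assume "a \<noteq> b"
  moreover have "m dvd a - b" using assms(1) by (simp add: cong_iff_dvd_diff)
  ultimately have "\<bar>m\<bar> \<le> \<bar>a - b\<bar>" by (intro dvd_imp_le_int) simp
  then show False using assms(2) by linarith
qed

lemma cong_diff_iff_cong_add: "[i - j = c] (mod m) \<longleftrightarrow> [i = j + c] (mod (m :: int))"
  by (simp add: cong_iff_dvd_diff algebra_simps)

lemma cong_succ_iff: "[i + 1 = t] (mod m) \<longleftrightarrow> [i = t - 1] (mod (m :: int))"
  by (simp add: cong_iff_dvd_diff algebra_simps)

lemma adjacent_commute: "adjacent n i j \<Longrightarrow> adjacent n j i"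
  unfolding adjacent_def by (metis cong_minus_minus_iff minus_diff_eq)

lemma E1_E1_nonadjacent_eq_0:
  assumes "\<not> adjacent n i j" "finsupp x"
  shows "lin (E1 n i) (lin (E1 n j) x) = (\<lambda>_. 0)"
proof (rule lin_lin_eq_0[OF assms(2)])
  fix t
  have "[i = t - 1 - 1] (mod int n) \<Longrightarrow> [j = t - 1] (mod int n) \<Longrightarrow> adjacent n i j"
    using cong_diff[of i "t - 1 - 1" n j "t - 1"] by (simp add: adjacent_def)
  then show "lin (E1 n i) (E1 n j t) = (\<lambda>_. 0)" using assms(1) by (auto simp: E1_def)
qed simp

lemma F1_F1_nonadjacent_eq_0:
  assumes "\<not> adjacent n i j" "finsupp x"
  shows "lin (F1 n i) (lin (F1 n j) x) = (\<lambda>_. 0)"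
proof (rule lin_lin_eq_0[OF assms(2)])
  fix t
  have "[i = t + 1] (mod int n) \<Longrightarrow> [j = t] (mod int n) \<Longrightarrow> adjacent n i j"
    using cong_diff[of i "t + 1" n j t] by (simp add: adjacent_def)
  then show "lin (F1 n i) (F1 n j t) = (\<lambda>_. 0)" using assms(1) by (auto simp: F1_def)
qed simp

lemma E1_F1_eq_0:
  assumes "\<not> [i = j] (mod int n)" "finsupp x"
  shows "lin (E1 n i) (lin (F1 n j) x) = (\<lambda>_. 0)"
proof (rule lin_lin_eq_0[OF assms(2)])
  fix t
  have "\<not> ([i = t] (mod int n) \<and> [j = t] (mod int n))"
    using assms(1) by (meson cong_sym cong_trans)
  then show "lin (E1 n i) (F1 n j t) = (\<lambda>_. 0)" by (simp add: E1_def F1_def)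
qed simp

lemma F1_E1_eq_0:
  assumes "\<not> [i = j] (mod int n)" "finsupp x"
  shows "lin (F1 n j) (lin (E1 n i) x) = (\<lambda>_. 0)"
proof (rule lin_lin_eq_0[OF assms(2)])
  fix t
  have "\<not> ([i = t - 1] (mod int n) \<and> [j = t - 1] (mod int n))"
    using assms(1) by (meson cong_sym cong_trans)
  then show "lin (F1 n j) (E1 n i t) = (\<lambda>_. 0)" by (simp add: E1_def F1_def)
qed simp

locale affine_gl =
  fixes n :: nat
  assumes n_ge_3: "3 \<le> n"
begin

lemma cong_close_absurd:
  assumes "[i = a] (mod int n)" "[i = b] (mod int n)" "0 < \<bar>a - b\<bar>" "\<bar>a - b\<bar> \<le> 2"
  shows False
proof -
  have "[a = b] (mod int n)" using assms(1,2) by (meson cong_sym cong_trans)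
  then show False using cong_imp_eq_if_close[of a b "int n"] assms(3,4) n_ge_3 by linarith
qed

lemma wt1_add_eq_0: "0 < \<bar>c\<bar> \<Longrightarrow> \<bar>c\<bar> \<le> 2 \<Longrightarrow> wt1 n a (a + c) = 0"
  using cong_close_absurd[of a a "a + c"] by (auto simp: wt1_def)

lemma E1_E1_eq_0: "finsupp x \<Longrightarrow> lin (E1 n i) (lin (E1 n i) x) = (\<lambda>_. 0)"
  by (rule lin_lin_eq_0) (use cong_close_absurd[of i "t - 1" "t - 1 - 1" for t] in
      \<open>auto simp: E1_def\<close>)

lemma E1_E1_E1_eq_0: "finsupp x \<Longrightarrow> lin (E1 n i) (lin (E1 n j) (lin (E1 n i) x)) = (\<lambda>_. 0)"
  by (rule lin_lin_lin_eq_0) (use cong_close_absurd[of i "t - 1" "t - 1 - 1 - 1" for t] in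
      \<open>auto simp: E1_def\<close>)

lemma F1_F1_eq_0: "finsupp x \<Longrightarrow> lin (F1 n i) (lin (F1 n i) x) = (\<lambda>_. 0)"
  by (rule lin_lin_eq_0) (use cong_close_absurd[of i t "t + 1" for t] in
      \<open>auto simp: F1_def\<close>)

lemma F1_F1_F1_eq_0: "finsupp x \<Longrightarrow> lin (F1 n i) (lin (F1 n j) (lin (F1 n i) x)) = (\<lambda>_. 0)"
  by (rule lin_lin_lin_eq_0) (use cong_close_absurd[of i t "t + 1 + 1" for t] in
      \<open>auto simp: F1_def\<close>)

lemma E1_F1_commutator:
  assumes "finsupp x"
  shows "lin (E1 n i) (lin (F1 n i) x) =
    vadd (lin (F1 n i) (lin (E1 n i) x))
      (vscale (inverse (vv - inverse vv))
        (vsub (vdiag (hwt1 n i) x) (vdiag (\<lambda>a. - hwt1 n i a) x)))"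
proof (rule fs_linear_eqI[OF _ _ _ assms])
  show "fs_linear (\<lambda>x. lin (E1 n i) (lin (F1 n i) x))"
    by (intro fs_linear_intros fs_preserving_intros) simp_all
  show "fs_linear (\<lambda>x. vadd (lin (F1 n i) (lin (E1 n i) x))
      (vscale (inverse (vv - inverse vv))
        (vsub (vdiag (hwt1 n i) x) (vdiag (\<lambda>a. - hwt1 n i a) x))))"
    by (intro fs_linear_intros fs_preserving_intros) simp_all
  fix t
  have "vv * y - inverse vv * y = (vv - inverse vv) * y"
    and "inverse vv * y - vv * y = - ((vv - inverse vv) * y)" for y
    by (simp_all add: algebra_simps)
  then have quantum_int: "inverse (vv - inverse vv) * (vv * y - inverse vv * y) = y"
    "inverse (vv - inverse vv) * (inverse vv * y - vv * y) = - y" for y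
    by simp_all
  consider "[i = t] (mod int n)" "\<not> [i = t - 1] (mod int n)"
    | "[i = t - 1] (mod int n)" "\<not> [i = t] (mod int n)"
    | "\<not> [i = t] (mod int n)" "\<not> [i = t - 1] (mod int n)"
    using cong_close_absurd[of i t "t - 1"] by fastforce
  then show "lin (E1 n i) (lin (F1 n i) (bas t)) =
    vadd (lin (F1 n i) (lin (E1 n i) (bas t)))
      (vscale (inverse (vv - inverse vv))
        (vsub (vdiag (hwt1 n i) (bas t)) (vdiag (\<lambda>a. - hwt1 n i a) (bas t))))"
    by cases (simp_all add: E1_def F1_def hwt1_def wt1_def cong_succ_iff vdiag_bas fun_eq_iff
        vadd_def vsub_def vscale_def quantum_int)
qed

lemma cartan_same [simp]: "cartan n i i = 2"
  using wt1_add_eq_0[of 1 i] wt1_add_eq_0[of "-1" "i + 1"] by (simp add: cartan_def)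

lemma cartan_adjacent:
  assumes "adjacent n i j"
  shows "cartan n i j = -1"
  using assms unfolding adjacent_def cong_diff_iff_cong_add
proof
  assume h: "[i = j + 1] (mod int n)"
  then have h': "[i + 1 = j + 2] (mod int n)"
    using cong_add[OF h cong_refl[of 1]] by (simp add: add.assoc)
  have "wt1 n i j = 0"
    using wt1_cong_left[OF h] wt1_add_eq_0[of "-1" "j + 1"] by simp
  moreover have "wt1 n i (j + 1) = 1"
    using wt1_cong_left[OF h] by simp
  moreover have "wt1 n (i + 1) j = 0"
    using wt1_cong_left[OF h'] wt1_add_eq_0[of "-2" "j + 2"] by simp
  ultimately show ?thesis by (simp add: cartan_def)
next
  assume h: "[i = j + -1] (mod int n)"
  then have h': "[i + 1 = j] (mod int n)"
    using cong_add[OF h cong_refl[of 1]] by simp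
  have "wt1 n i j = 0"
    using wt1_cong_left[OF h] wt1_add_eq_0[of 1 "j + -1"] by (simp add: algebra_simps)
  moreover have "wt1 n i (j + 1) = 0"
    using wt1_cong_left[OF h] wt1_add_eq_0[of 2 "j + -1"] by (simp add: algebra_simps)
  moreover have "wt1 n (i + 1) j = 1"
    using wt1_cong_left[OF h'] by simp
  ultimately show ?thesis by (simp add: cartan_def)
qed

lemma cartan_nonadjacent:
  assumes "\<not> adjacent n i j" "\<not> [i = j] (mod int n)"
  shows "cartan n i j = 0"
proof -
  have "\<not> [i = j + 1] (mod int n)" "\<not> [i = j - 1] (mod int n)"
    using assms(1) unfolding adjacent_def cong_diff_iff_cong_add by simp_all
  then show ?thesis using assms(2) by (simp add: cartan_def wt1_def cong_succ_iff)
qed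

lemma epsp_eq_wt1_diff: "epsp n i j = wt1 n i j - wt1 n i (j + 1)"
proof -
  have "[i = j] (mod int n) \<longleftrightarrow> [j = i] (mod int n)"
    and "[i = j + 1] (mod int n) \<longleftrightarrow> [j = i - 1] (mod int n)"
    by (rule cong_sym_eq) (metis cong_sym_eq cong_succ_iff)
  moreover have "\<not> ([j = i] (mod int n) \<and> [j = i - 1] (mod int n))"
    using cong_close_absurd[of j i "i - 1"] by auto
  ultimately show ?thesis unfolding epsp_def wt1_def by auto
qed

lemma opE_opF_commutator_tens:
  assumes "finsupp x" "finsupp y"
    and "opE n i (opF n i y) = vadd (opF n i (opE n i y))
      (vscale (inverse (vv - inverse vv)) (vsub (vdiag (hwt n i) y) (vdiag (\<lambda>u. - hwt n i u) y)))"
  shows "opE n i (opF n i (tens x y)) = vadd (opF n i (opE n i (tens x y)))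
      (vscale (inverse (vv - inverse vv))
        (vsub (vdiag (hwt n i) (tens x y)) (vdiag (\<lambda>u. - hwt n i u) (tens x y))))"
  using assms
  by (simp add: opE_tens opF_tens tens_expand vdiag_hwt_opF vdiag_neg_hwt1_E1 E1_F1_commutator)
    (rule list_fun_eqI; simp add: vec_op_defs power_int_add power_int_minus algebra_simps)

lemma opE_opF_commute_tens:
  assumes "finsupp x" "finsupp y" "\<not> [i = j] (mod int n)"
    and "opE n i (opF n j y) = opF n j (opE n i y)"
  shows "opE n i (opF n j (tens x y)) = opF n j (opE n i (tens x y))"
  using assms
  by (simp add: opE_tens opF_tens tens_expand vdiag_hwt_opF vdiag_neg_hwt1_E1 E1_F1_eq_0
      F1_E1_eq_0)
    (rule list_fun_eqI; simp add: vec_op_defs cartan_commute[of n j i] algebra_simps)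

lemma opE_opE_commute_tens:
  assumes "finsupp x" "finsupp y" "\<not> adjacent n i j" "\<not> [i = j] (mod int n)"
    and "opE n i (opE n j y) = opE n j (opE n i y)"
  shows "opE n i (opE n j (tens x y)) = opE n j (opE n i (tens x y))"
proof -
  have "\<not> adjacent n j i" "\<not> [j = i] (mod int n)"
    using assms(3,4) adjacent_commute cong_sym by blast+
  then show ?thesis
    using assms
    by (simp add: opE_tens tens_expand vdiag_hwt_opE E1_E1_nonadjacent_eq_0 cartan_nonadjacent
        vdiag_commute[of "hwt n j"])
      (rule list_fun_eqI; simp add: vec_op_defs algebra_simps)
qed

lemma opF_opF_commute_tens:
  assumes "finsupp x" "finsupp y" "\<not> adjacent n i j" "\<not> [i = j] (mod int n)"
    and "opF n i (opF n j y) = opF n j (opF n i y)"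
  shows "opF n i (opF n j (tens x y)) = opF n j (opF n i (tens x y))"
proof -
  have "\<not> adjacent n j i" "\<not> [j = i] (mod int n)"
    using assms(3,4) adjacent_commute cong_sym by blast+
  then show ?thesis
    using assms
    by (simp add: opF_tens tens_expand vdiag_neg_hwt1_F1 F1_F1_nonadjacent_eq_0 cartan_nonadjacent
        vdiag_commute[of "\<lambda>a. - hwt1 n j a"])
      (rule list_fun_eqI; simp add: vec_op_defs algebra_simps)
qed

lemma serre_E_tens:
  assumes "finsupp x" "finsupp y" "adjacent n i j"
    and "vadd (vsub (opE n i (opE n i (opE n j y)))
                    (vscale (vv + inverse vv) (opE n i (opE n j (opE n i y)))))
              (opE n j (opE n i (opE n i y))) = (\<lambda>_. 0)"
  shows "vadd (vsub (opE n i (opE n i (opE n j (tens x y))))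
                    (vscale (vv + inverse vv) (opE n i (opE n j (opE n i (tens x y))))))
              (opE n j (opE n i (opE n i (tens x y)))) = (\<lambda>_. 0)"
proof -
  have adj: "adjacent n j i" using assms(3) by (rule adjacent_commute)
  have last: "opE n j (opE n i (opE n i y)) =
      vsub (vscale (vv + inverse vv) (opE n i (opE n j (opE n i y))))
        (opE n i (opE n i (opE n j y)))"
    using assms(4) by (rule eq_vsub_if_vadd_vsub_eq_0)
  show ?thesis
    using assms(1,2)
    by (simp add: opE_tens tens_expand vdiag_hwt_opE E1_E1_eq_0 E1_E1_E1_eq_0 last
        cartan_adjacent[OF assms(3)] cartan_adjacent[OF adj] vdiag_commute[of "hwt n j"])
      (rule list_fun_eqI; simp add: vec_op_defs power_int_minus;
        (use right_inverse[OF vv_neq_0] in algebra))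
qed

lemma serre_F_tens:
  assumes "finsupp x" "finsupp y" "adjacent n i j"
    and "vadd (vsub (opF n i (opF n i (opF n j y)))
                    (vscale (vv + inverse vv) (opF n i (opF n j (opF n i y)))))
              (opF n j (opF n i (opF n i y))) = (\<lambda>_. 0)"
  shows "vadd (vsub (opF n i (opF n i (opF n j (tens x y))))
                    (vscale (vv + inverse vv) (opF n i (opF n j (opF n i (tens x y))))))
              (opF n j (opF n i (opF n i (tens x y)))) = (\<lambda>_. 0)"
proof -
  have adj: "adjacent n j i" using assms(3) by (rule adjacent_commute)
  have last: "opF n j (opF n i (opF n i y)) =
      vsub (vscale (vv + inverse vv) (opF n i (opF n j (opF n i y))))
        (opF n i (opF n i (opF n j y)))"
    using assms(4) by (rule eq_vsub_if_vadd_vsub_eq_0)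
  show ?thesis
    using assms(1,2)
    by (simp add: opF_tens tens_expand vdiag_neg_hwt1_F1 F1_F1_eq_0 F1_F1_F1_eq_0 last
        cartan_adjacent[OF assms(3)] cartan_adjacent[OF adj] vdiag_commute[of "\<lambda>a. - hwt1 n j a"])
      (rule list_fun_eqI; simp add: vec_op_defs power_int_minus;
        (use right_inverse[OF vv_neq_0] in algebra))
qed

lemma opE_opF_eq_commutator:
  assumes "finsupp f"
  shows "opE n i (opF n i f) = vadd (opF n i (opE n i f))
      (vscale (inverse (vv - inverse vv)) (vsub (vdiag (hwt n i) f) (vdiag (\<lambda>u. - hwt n i u) f)))"
  using assms
  by (rule tensor_induct)
    (assumption | rule opE_opF_commutator_tens | intro fs_op_intros
      | simp add: opE_def opF_def vdiag_bas)+

lemma opE_opF_commute: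
  assumes "finsupp f" "\<not> [i = j] (mod int n)"
  shows "opE n i (opF n j f) = opF n j (opE n i f)"
  using assms(1)
  by (rule tensor_induct)
    (assumption | rule opE_opF_commute_tens[OF _ _ assms(2)] | intro fs_op_intros
      | simp add: opE_def opF_def)+

lemma opE_opE_commute:
  assumes "finsupp f" "\<not> adjacent n i j" "\<not> [i = j] (mod int n)"
  shows "opE n i (opE n j f) = opE n j (opE n i f)"
  using assms(1)
  by (rule tensor_induct)
    (assumption | rule opE_opE_commute_tens[OF _ _ assms(2,3)] | intro fs_op_intros
      | simp add: opE_def)+

lemma opF_opF_commute:
  assumes "finsupp f" "\<not> adjacent n i j" "\<not> [i = j] (mod int n)"
  shows "opF n i (opF n j f) = opF n j (opF n i f)"
  using assms(1)
  by (rule tensor_induct)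
    (assumption | rule opF_opF_commute_tens[OF _ _ assms(2,3)] | intro fs_op_intros
      | simp add: opF_def)+

lemma serre_E:
  assumes "finsupp f" "adjacent n i j"
  shows "vadd (vsub (opE n i (opE n i (opE n j f)))
                    (vscale (vv + inverse vv) (opE n i (opE n j (opE n i f)))))
              (opE n j (opE n i (opE n i f))) = (\<lambda>_. 0)"
  using assms(1)
  by (rule tensor_induct)
    (assumption | rule serre_E_tens[OF _ _ assms(2)] | intro fs_op_intros
      | simp add: opE_def vec_op_defs)+

lemma serre_F:
  assumes "finsupp f" "adjacent n i j"
  shows "vadd (vsub (opF n i (opF n i (opF n j f)))
                    (vscale (vv + inverse vv) (opF n i (opF n j (opF n i f)))))
              (opF n j (opF n i (opF n i f))) = (\<lambda>_. 0)"
  using assms(1)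
  by (rule tensor_induct)
    (assumption | rule serre_F_tens[OF _ _ assms(2)] | intro fs_op_intros
      | simp add: opF_def vec_op_defs)+

lemma opE_opF_commutator:
  assumes "finsupp f"
  shows "vsub (opE n i (opF n i f)) (opF n i (opE n i f)) =
    vscale (inverse (vv - inverse vv))
      (vsub (opK n i (opKinv n (i + 1) f)) (opKinv n i (opK n (i + 1) f)))"
proof -
  have "opK n i (opKinv n (i + 1) f) = vdiag (hwt n i) f"
    and "opKinv n i (opK n (i + 1) f) = vdiag (\<lambda>u. - hwt n i u) f"
    using assms by (simp_all add: opK_eq_vdiag opKinv_eq_vdiag vdiag_vdiag hwt_def[abs_def])
  then show ?thesis
    using opE_opF_eq_commutator[OF assms] by (simp add: vec_op_defs)
qed

lemma opK_opE:
  "finsupp f \<Longrightarrow> opK n i (opE n j f) = vscale (vv powi epsp n i j) (opE n j (opK n i f))"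
  by (simp add: opK_eq_vdiag vdiag_wt_opE epsp_eq_wt1_diff)

lemma opK_opF:
  "finsupp f \<Longrightarrow> opK n i (opF n j f) = vscale (vv powi (- epsp n i j)) (opF n j (opK n i f))"
  by (simp add: opK_eq_vdiag vdiag_wt_opF epsp_eq_wt1_diff)

end

section \<open>The extra relations of T\<close>

lemma opprod_Nil [simp]: "opprod [] f = f"
  by (simp add: opprod_def)

lemma opprod_Cons [simp]: "opprod (A # As) f = A (opprod As f)"
  by (simp add: opprod_def)

lemma opprod_opK:
  "finsupp f \<Longrightarrow> opprod (map (opK n) ks) f = vdiag (\<lambda>u. sum_list (map (\<lambda>k. wt n k u) ks)) f"
  by (induction ks) (simp_all add: opK_eq_vdiag vdiag_vdiag)

lemma opprod_opK_minus_powers: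
  assumes "finsupp f"
  shows "opprod (map (\<lambda>j g. vsub (opK n i g) (vscale (vv ^ j) g)) js) f
     = (\<lambda>u. prod_list (map (\<lambda>j. vv powi wt n i u - vv ^ j) js) * f u)"
proof (induction js)
  case (Cons j js)
  let ?g = "\<lambda>u. prod_list (map (\<lambda>j. vv powi wt n i u - vv ^ j) js) * f u"
  have "opprod (map (\<lambda>j g. vsub (opK n i g) (vscale (vv ^ j) g)) (j # js)) f
      = vsub (vdiag (wt n i) ?g) (vscale (vv ^ j) ?g)"
    using assms by (simp add: Cons.IH opK_eq_vdiag)
  then show ?case by (simp add: vec_op_defs algebra_simps)
qed simp

lemma sum_wt1_residues:
  assumes "1 \<le> n"
  shows "sum_list (map (\<lambda>k. wt1 n k a) [1..int n]) = 1"
proof -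
  define k0 where "k0 = (if a mod int n = 0 then int n else a mod int n)"
  have "0 \<le> a mod int n" "a mod int n < int n" using assms by simp_all
  then have k0: "k0 \<in> {1..int n}" "[k0 = a] (mod int n)"
    by (auto simp: k0_def cong_def)
  have "wt1 n k a = (if k = k0 then 1 else 0)" if k: "k \<in> {1..int n}" for k
  proof -
    have "[k = a] (mod int n) \<longleftrightarrow> [k = k0] (mod int n)"
      using k0(2) by (meson cong_sym cong_trans)
    moreover have "[k = k0] (mod int n) \<longleftrightarrow> k = k0"
      using k k0(1) cong_imp_eq_if_close[of k k0 "int n"] by auto
    ultimately show ?thesis by (simp add: wt1_def)
  qed
  then have "sum_list (map (\<lambda>k. wt1 n k a) [1..int n]) = (\<Sum>k\<in>{1..int n}. if k = k0 then 1 else 0)"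
    by (simp add: sum_list_distinct_conv_sum_set)
  also have "\<dots> = 1" using k0(1) by simp
  finally show ?thesis .
qed

lemma sum_wt_residues:
  "1 \<le> n \<Longrightarrow> sum_list (map (\<lambda>k. wt n k u) [1..int n]) = int (length u)"
  by (induction u) (simp_all add: sum_list_addf sum_wt1_residues)

lemma Vr_finsupp: "f \<in> Vr r \<Longrightarrow> finsupp f"
  by (simp add: Vr_def finsupp_def)

lemma Vr_length: "f \<in> Vr r \<Longrightarrow> f u \<noteq> 0 \<Longrightarrow> length u = r"
  by (simp add: Vr_def)

lemma opprod_opK_all:
  assumes "1 \<le> n" "f \<in> Vr r"
  shows "opprod (map (opK n) [1..int n]) f = vscale (vv ^ r) f"
proof
  fix u
  show "opprod (map (opK n) [1..int n]) f u = vscale (vv ^ r) f u"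
    using Vr_length[OF assms(2), of u]
    by (cases "f u = 0")
      (simp_all add: opprod_opK Vr_finsupp[OF assms(2)] sum_wt_residues[OF assms(1)] vdiag_def
        vscale_def)
qed

lemma opprod_opK_minus_powers_eq_0:
  assumes "f \<in> Vr r"
  shows "opprod (map (\<lambda>j g. vsub (opK n i g) (vscale (vv ^ j) g)) [0..<r + 1]) f = (\<lambda>_. 0)"
proof
  fix u
  have "prod_list (map (\<lambda>j. vv powi wt n i u - vv ^ j) [0..<r + 1]) = 0" if "length u = r"
  proof -
    define m where "m = nat (wt n i u)"
    have "vv powi wt n i u = vv ^ m" and "m < r + 1"
      using wt_bounds[of n i u] that by (simp_all add: m_def power_int_def nat_less_iff)
    then have "0 \<in> (\<lambda>j. vv powi wt n i u - vv ^ j) ` set [0..<r + 1]"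
      by (intro image_eqI[of _ _ m]) auto
    then show ?thesis by (simp only: prod_list_zero_iff set_map)
  qed
  then show "opprod (map (\<lambda>j g. vsub (opK n i g) (vscale (vv ^ j) g)) [0..<r + 1]) f u = 0"
    using Vr_length[OF assms, of u]
    by (cases "f u = 0")
      (simp_all add: opprod_opK_minus_powers[OF Vr_finsupp[OF assms]] del: upt_Suc)
qed

lemma T_extra_relations_tensor_space: "1 \<le> n \<Longrightarrow> T_extra_relations n r (Vr r) (opK n)"
  unfolding T_extra_relations_def using opprod_opK_all opprod_opK_minus_powers_eq_0 by blast

lemma (in affine_gl) T_relations_tensor_space:
  "T_relations n r (Vr r) (opE n) (opF n) (opK n) (opKinv n)"
proof -
  have noncong: "\<not> [i = j] (mod int n)"
    if "1 \<le> i" "i \<le> int n" "1 \<le> j" "j \<le> int n" "i \<noteq> j" for i j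
  proof
    assume "[i = j] (mod int n)"
    moreover have "\<bar>i - j\<bar> < int n" using that(1-4) by (auto simp: abs_less_iff)
    ultimately show False using that(5) cong_imp_eq_if_close by blast
  qed
  show ?thesis
    unfolding T_relations_def
    using n_ge_3
    by (auto simp: noncong Vr_finsupp opK_commute opK_opKinv opKinv_opK opK_opE opK_opF
        opE_opF_commutator opE_opF_commute serre_E serre_F
        intro: opE_opE_commute opF_opF_commute T_extra_relations_tensor_space)
qed

theorem proposition1p6p5:
  fixes n r :: nat
  assumes "r \<ge> 3" and "n > r"
  shows "T_extra_relations n r (Vr r) (opK n)
       \<and> T_relations n r (Vr r) (opE n) (opF n) (opK n) (opKinv n)"
proof -
  interpret affine_gl n
    using assms by unfold_locales simp
  show ?thesis
    using assms T_extra_relations_tensor_space T_relations_tensor_space by simp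
qed

end
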